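(* Let $\mathcal K=\{\mathbf x\in\mathbb R^n : \mathbf k_i^T\mathbf x\ge 0,\ i=1,\dots,p\}$ be a polyhedral cone with non-empty topological interior, where each $\mathbf k_i$ has unit Euclidean length, and let $\mathbf x_\infty$ and $z_\infty$ denote the center of its insphere and its inradius, respectively. Define linear programs as follows. Problem $P_0$: maximize $z$ over $(\mathbf x,z)\in\mathbb R^n\times\mathbb R$ subject to $\mathbf k_i^T\mathbf x\ge z$ for all $i$ and $-1\le x_i\le 1$ for all $i=1,\dots,n$. Given Problem $P_\ell$, let $(\mathbf x_\ell,z_\ell)$ be an (arbitrarily chosen) optimal solution of $P_\ell$, let $\mathbf u_\ell=\mathbf x_\ell/\|\mathbf x_\ell\|$, and let Problem $P_{\ell+1}$ be Problem $P_\ell$ with the additional constraint $\mathbf u_\ell^T\mathbf x\le 1$. Then $\mathbf x_\ell\to\mathbf x_\infty$ and $z_\ell\to z_\infty$ as $\ell\to\infty$.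
   Context: $B_r(\mathbf x)=\{\mathbf y\in\mathbb R^n:\|\mathbf x-\mathbf y\|\le r\}$ denotes the closed ball, with $\|\cdot\|$ the Euclidean norm. The insphere of a polyhedral cone $\mathcal K$ is the largest ball contained in $\mathcal K$ whose center lies in $B_1(\mathbf 0)$ (it is unique when $\mathcal K$ has non-empty interior), and the inradius is its radius. (For each $\ell$, problem $P_\ell$ has an optimal solution and $\|\mathbf x_\ell\|\ge 1$, so $\mathbf u_\ell$ is well defined.) *)

theory Defs
  imports "HOL-Analysis.Analysis"
begin

definition poly_cone :: "nat \<Rightarrow> (nat \<Rightarrow> real ^ 'n) \<Rightarrow> (real ^ 'n) set" where
  "poly_cone p k = {x. \<forall>i<p. k i \<bullet> x \<ge> 0}"

definition is_insphere :: "(real ^ 'n) set \<Rightarrow> real ^ 'n \<Rightarrow> real \<Rightarrow> bool" where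
  "is_insphere K c r \<longleftrightarrow> norm c \<le> 1 \<and> cball c r \<subseteq> K \<and>
     (\<forall>c' r'. norm c' \<le> 1 \<and> cball c' r' \<subseteq> K \<longrightarrow> r' \<le> r)"

text \<open>Feasible set of problem P_l, given the earlier optimal points xs 0, ..., xs (l-1):
  k_i . x >= z for all i, -1 <= x_j <= 1 for all coordinates j, and u_m . x <= 1 for m < l,
  where u_m = xs m / norm (xs m).\<close>
definition lp_feasible :: "nat \<Rightarrow> (nat \<Rightarrow> real ^ 'n) \<Rightarrow> (nat \<Rightarrow> real ^ 'n) \<Rightarrow> nat
    \<Rightarrow> real ^ 'n \<Rightarrow> real \<Rightarrow> bool" where
  "lp_feasible p k xs l x z \<longleftrightarrow>
     (\<forall>i<p. k i \<bullet> x \<ge> z) \<and> (\<forall>j. -1 \<le> x $ j \<and> x $ j \<le> 1) \<and>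
     (\<forall>m<l. (xs m /\<^sub>R norm (xs m)) \<bullet> x \<le> 1)"

definition lp_optimal :: "nat \<Rightarrow> (nat \<Rightarrow> real ^ 'n) \<Rightarrow> (nat \<Rightarrow> real ^ 'n) \<Rightarrow> nat
    \<Rightarrow> real ^ 'n \<Rightarrow> real \<Rightarrow> bool" where
  "lp_optimal p k xs l x z \<longleftrightarrow> lp_feasible p k xs l x z \<and>
     (\<forall>x' z'. lp_feasible p k xs l x' z' \<longrightarrow> z' \<le> z)"

end

(* The optimal values z_l decrease, since P_(l+1) only adds a constraint to P_l, and they
   are bounded below by the inradius, since (x_inf, z_inf) is feasible for every P_l.
   The cut u_m . x <= 1 says x_m . x_l <= |x_m| for m < l; along consecutive terms of a
   convergent subsequence this becomes |y|^2 <= |y|, so every limit point y of the x_l lies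
   in the unit ball, and it keeps the margin lim z_l >= z_inf to every facet. By strict
   convexity of the unit ball the insphere center is unique, hence y = x_inf; as the x_l
   stay in the cube [-1,1]^n they converge to x_inf, and then the margin of x_inf forces
   lim z_l <= z_inf. *)

theory Submission
  imports Defs
begin

lemma norm_midpoint_less_1:
  fixes x y :: "'a::real_inner"
  assumes "norm x \<le> 1" "norm y \<le> 1" "x \<noteq> y"
  shows "norm (midpoint x y) < 1"
proof -
  have "norm (x + y)^2 + norm (x - y)^2 = 2 * norm x ^ 2 + 2 * norm y ^ 2"
    by (simp add: power2_norm_eq_inner algebra_simps inner_commute)
  moreover have "0 < norm (x - y)^2" "norm x ^ 2 \<le> 1" "norm y ^ 2 \<le> 1"
    using assms by (auto simp: power_le_one)
  ultimately have "norm (x + y)^2 < 2^2" by (simp only: power2_eq_square)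
  then have "norm (x + y) < 2" by (rule power_less_imp_less_base) simp
  then show ?thesis by (simp add: midpoint_def)
qed

lemma LIMSEQ_if_unique_limit_point:
  fixes x :: "nat \<Rightarrow> 'a::metric_space"
  assumes "compact S" and "\<And>n. x n \<in> S"
    and limit_point: "\<And>r y. strict_mono r \<Longrightarrow> (x \<circ> r) \<longlonglongrightarrow> y \<Longrightarrow> y = a"
  shows "x \<longlonglongrightarrow> a"
proof (rule ccontr)
  assume "\<not> x \<longlonglongrightarrow> a"
  then obtain e where "e > 0" and "\<exists>\<^sub>F n in sequentially. \<not> dist (x n) a < e"
    by (auto simp: tendsto_iff not_eventually)
  then have "infinite {n. \<not> dist (x n) a < e}"
    by (simp add: frequently_cofinite flip: cofinite_eq_sequentially)
  then obtain g :: "nat \<Rightarrow> nat" where g: "strict_mono g" "\<And>n. \<not> dist (x (g n)) a < e"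
    using infinite_enumerate by blast
  have "\<forall>n. (x \<circ> g) n \<in> S" using assms(2) by simp
  then obtain y h where h: "strict_mono h" "(x \<circ> g \<circ> h) \<longlonglongrightarrow> y"
    using seq_compactE[OF compact_imp_seq_compact[OF \<open>compact S\<close>]] by blast
  then have "(x \<circ> g \<circ> h) \<longlonglongrightarrow> a"
    using limit_point[of "g \<circ> h" y] g(1) by (simp add: strict_mono_o o_assoc)
  then have "\<forall>\<^sub>F n in sequentially. dist (x (g (h n))) a < e"
    using \<open>e > 0\<close> tendstoD by fastforce
  then obtain n where "dist (x (g (h n))) a < e"
    by (auto simp: eventually_sequentially)
  with g(2) show False by blast
qed

lemma cball_subset_poly_cone_iff:
  fixes k :: "nat \<Rightarrow> real ^ 'n"
  assumes unit: "\<And>i. i < p \<Longrightarrow> norm (k i) = 1" and "0 \<le> r"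
  shows "cball c r \<subseteq> poly_cone p k \<longleftrightarrow> (\<forall>i<p. r \<le> k i \<bullet> c)"
proof
  assume cball: "cball c r \<subseteq> poly_cone p k"
  show "\<forall>i<p. r \<le> k i \<bullet> c"
  proof (intro allI impI)
    fix i assume i: "i < p"
    have "c - r *\<^sub>R k i \<in> poly_cone p k"
      using cball unit[OF i] \<open>0 \<le> r\<close> by (auto simp: dist_norm)
    then have "0 \<le> k i \<bullet> c - r * (k i \<bullet> k i)"
      using i by (simp add: poly_cone_def inner_diff_right)
    then show "r \<le> k i \<bullet> c"
      using unit[OF i] by (simp flip: power2_norm_eq_inner)
  qed
next
  assume margin: "\<forall>i<p. r \<le> k i \<bullet> c"
  have "0 \<le> k i \<bullet> y" if "i < p" "dist c y \<le> r" for i y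
  proof -
    have "k i \<bullet> (c - y) \<le> r"
      using norm_cauchy_schwarz[of "k i" "c - y"] unit that by (simp add: dist_norm)
    moreover have "r \<le> k i \<bullet> c" using margin that(1) by blast
    ultimately show ?thesis by (simp add: inner_diff_right)
  qed
  then show "cball c r \<subseteq> poly_cone p k" by (auto simp: poly_cone_def)
qed

lemma insphere_radius_ge:
  fixes k :: "nat \<Rightarrow> real ^ 'n"
  assumes unit: "\<And>i. i < p \<Longrightarrow> norm (k i) = 1"
    and ins: "is_insphere (poly_cone p k) xinf zinf"
    and "0 < s" "norm c \<le> s" "0 \<le> r" and margin: "\<forall>i<p. r \<le> k i \<bullet> c"
  shows "r / s \<le> zinf"
proof -
  have "\<forall>i<p. r / s \<le> k i \<bullet> (c /\<^sub>R s)"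
    using margin \<open>0 < s\<close> by (auto simp: field_simps)
  then have "cball (c /\<^sub>R s) (r / s) \<subseteq> poly_cone p k"
    using cball_subset_poly_cone_iff[OF unit] \<open>0 < s\<close> \<open>0 \<le> r\<close> by simp
  moreover have "norm (c /\<^sub>R s) \<le> 1"
    using \<open>0 < s\<close> \<open>norm c \<le> s\<close> by (simp add: field_simps)
  ultimately show ?thesis
    using ins unfolding is_insphere_def by blast
qed

lemma insphere_radius_pos:
  fixes k :: "nat \<Rightarrow> real ^ 'n"
  assumes unit: "\<And>i. i < p \<Longrightarrow> norm (k i) = 1"
    and "interior (poly_cone p k) \<noteq> {}"
    and ins: "is_insphere (poly_cone p k) xinf zinf"
  shows "0 < zinf"
proof -
  obtain c e where "0 < e" "cball c e \<subseteq> poly_cone p k"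
    using assms(2) mem_interior_cball by blast
  then have "\<forall>i<p. e \<le> k i \<bullet> c"
    using cball_subset_poly_cone_iff[OF unit] by simp
  then have "e / max 1 (norm c) \<le> zinf"
    using \<open>0 < e\<close> by (intro insphere_radius_ge[OF unit ins]) auto
  moreover have "0 < e / max 1 (norm c)"
    using \<open>0 < e\<close> by simp
  ultimately show ?thesis by linarith
qed

lemma insphere_margin:
  fixes k :: "nat \<Rightarrow> real ^ 'n"
  assumes unit: "\<And>i. i < p \<Longrightarrow> norm (k i) = 1"
    and ins: "is_insphere (poly_cone p k) xinf zinf"
  shows "\<forall>i<p. zinf \<le> k i \<bullet> xinf"
proof -
  have "cball 0 0 \<subseteq> poly_cone p k"
    by (simp add: poly_cone_def)
  with ins have "0 \<le> zinf"
    unfolding is_insphere_def by (metis norm_zero order.refl zero_le_one)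
  with ins show ?thesis
    using cball_subset_poly_cone_iff[OF unit] by (simp add: is_insphere_def)
qed

text \<open>The midpoint of two distinct insphere centers lies strictly inside the unit ball,
  so rescaling it to the unit sphere would center a strictly larger inscribed ball.\<close>
lemma insphere_center_unique:
  fixes k :: "nat \<Rightarrow> real ^ 'n"
  assumes unit: "\<And>i. i < p \<Longrightarrow> norm (k i) = 1"
    and ins: "is_insphere (poly_cone p k) xinf zinf" and "0 < zinf"
    and "norm y \<le> 1" and margin: "\<forall>i<p. zinf \<le> k i \<bullet> y"
  shows "y = xinf"
proof (rule ccontr)
  assume "y \<noteq> xinf"
  define m where "m = midpoint y xinf"
  define s where "s = (1 + norm m) / 2"
  have "norm m < 1"
    unfolding m_def using \<open>norm y \<le> 1\<close> ins \<open>y \<noteq> xinf\<close>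
    by (intro norm_midpoint_less_1) (auto simp: is_insphere_def)
  then have s: "0 < s" "norm m \<le> s" "s < 1"
    unfolding s_def by (auto simp: add_pos_nonneg)
  have "zinf \<le> k i \<bullet> m" if "i < p" for i
  proof -
    have "zinf \<le> k i \<bullet> y" "zinf \<le> k i \<bullet> xinf"
      using margin insphere_margin[OF unit ins] that by auto
    then show ?thesis by (simp add: m_def midpoint_def inner_add_right)
  qed
  then have "zinf / s \<le> zinf"
    using s \<open>0 < zinf\<close> by (intro insphere_radius_ge[OF unit ins]) auto
  moreover have "zinf < zinf / s"
    using s \<open>0 < zinf\<close> by (simp add: less_divide_eq)
  ultimately show False by linarith
qed

lemma lp_feasible_if_norm_le_1:
  fixes x :: "real ^ 'n"
  assumes "norm x \<le> 1" and "\<forall>i<p. z \<le> k i \<bullet> x"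
  shows "lp_feasible p k xs l x z"
  unfolding lp_feasible_def
proof (intro conjI allI impI)
  fix j
  show "-1 \<le> x $ j" "x $ j \<le> 1"
    using component_le_norm_cart[of x j] assms(1) by auto
next
  fix m
  have "norm (xs m /\<^sub>R norm (xs m)) \<le> 1"
    by (cases "xs m = 0") auto
  then show "(xs m /\<^sub>R norm (xs m)) \<bullet> x \<le> 1"
    using norm_cauchy_schwarz[of "xs m /\<^sub>R norm (xs m)" x] assms(1)
    by (smt (verit) mult_left_le norm_ge_zero)
qed (use assms(2) in auto)

lemma lp_optimal_value_ge_inradius:
  fixes k :: "nat \<Rightarrow> real ^ 'n"
  assumes unit: "\<And>i. i < p \<Longrightarrow> norm (k i) = 1"
    and ins: "is_insphere (poly_cone p k) xinf zinf"
    and opt: "\<And>l. lp_optimal p k xs l (xs l) (zs l)"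
  shows "zinf \<le> zs l"
proof -
  have "lp_feasible p k xs l xinf zinf"
    using ins by (intro lp_feasible_if_norm_le_1 insphere_margin[OF unit ins])
      (simp add: is_insphere_def)
  with opt[of l] show ?thesis
    by (simp add: lp_optimal_def)
qed

lemma lp_optimal_value_decseq:
  assumes opt: "\<And>l. lp_optimal p k xs l (xs l) (zs l)"
  shows "decseq zs"
proof (rule decseq_SucI)
  fix l
  have "lp_feasible p k xs l (xs (Suc l)) (zs (Suc l))"
    using opt[of "Suc l"] by (auto simp: lp_optimal_def lp_feasible_def)
  then show "zs (Suc l) \<le> zs l"
    using opt[of l] by (simp add: lp_optimal_def)
qed

lemma lp_optimal_inner_le_norm:
  assumes opt: "\<And>l. lp_optimal p k xs l (xs l) (zs l)" and "m < l"
  shows "xs m \<bullet> xs l \<le> norm (xs m)"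
proof (cases "xs m = 0")
  case False
  have "(xs m /\<^sub>R norm (xs m)) \<bullet> xs l \<le> 1"
    using opt[of l] \<open>m < l\<close> by (simp add: lp_optimal_def lp_feasible_def)
  with False show ?thesis by (simp add: field_simps)
qed simp

lemma limit_point_norm_le_1:
  fixes x :: "nat \<Rightarrow> 'a::real_inner"
  assumes inner_le: "\<And>m l. m < l \<Longrightarrow> x m \<bullet> x l \<le> norm (x m)"
    and "strict_mono r" and lim: "(x \<circ> r) \<longlonglongrightarrow> y"
  shows "norm y \<le> 1"
proof -
  have "(\<lambda>j. x (r j) \<bullet> x (r (Suc j))) \<longlonglongrightarrow> y \<bullet> y"
    using lim LIMSEQ_Suc[OF lim] by (intro tendsto_inner) (auto simp: o_def)
  moreover have "(\<lambda>j. norm (x (r j))) \<longlonglongrightarrow> norm y"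
    using tendsto_norm[OF lim] by (simp add: o_def)
  moreover have "x (r j) \<bullet> x (r (Suc j)) \<le> norm (x (r j))" for j
    using inner_le \<open>strict_mono r\<close> by (simp add: strict_mono_def)
  ultimately have "norm y * norm y \<le> norm y * 1"
    by (simp add: LIMSEQ_le flip: power2_norm_eq_inner power2_eq_square)
  then show ?thesis
    by (cases "y = 0") simp_all
qed

lemma lp_optimal_limit_margin:
  assumes opt: "\<And>l. lp_optimal p k xs l (xs l) (zs l)"
    and "strict_mono r" and "(xs \<circ> r) \<longlonglongrightarrow> y" and "zs \<longlonglongrightarrow> L"
  shows "\<forall>i<p. L \<le> k i \<bullet> y"
proof (intro allI impI)
  fix i assume "i < p"
  have "(\<lambda>j. zs (r j)) \<longlonglongrightarrow> L"
    using LIMSEQ_subseq_LIMSEQ[OF \<open>zs \<longlonglongrightarrow> L\<close> \<open>strict_mono r\<close>] by (simp add: o_def)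
  moreover have "(\<lambda>j. k i \<bullet> xs (r j)) \<longlonglongrightarrow> k i \<bullet> y"
    using \<open>(xs \<circ> r) \<longlonglongrightarrow> y\<close> by (intro tendsto_inner tendsto_const) (simp add: o_def)
  moreover have "zs (r j) \<le> k i \<bullet> xs (r j)" for j
    using opt[of "r j"] \<open>i < p\<close> by (simp add: lp_optimal_def lp_feasible_def)
  ultimately show "L \<le> k i \<bullet> y"
    by (simp add: LIMSEQ_le)
qed

theorem theorem1:
  fixes p :: nat and k :: "nat \<Rightarrow> real ^ 'n"
    and xinf :: "real ^ 'n" and zinf :: real
    and xs :: "nat \<Rightarrow> real ^ 'n" and zs :: "nat \<Rightarrow> real"
  assumes unit: "\<And>i. i < p \<Longrightarrow> norm (k i) = 1"
    and int: "interior (poly_cone p k) \<noteq> {}"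
    and ins: "is_insphere (poly_cone p k) xinf zinf"
    and opt: "\<And>l. lp_optimal p k xs l (xs l) (zs l)"
  shows "xs \<longlonglongrightarrow> xinf \<and> zs \<longlonglongrightarrow> zinf"
proof -
  have "0 < zinf" and "norm xinf \<le> 1"
    using insphere_radius_pos[OF unit int ins] ins by (auto simp: is_insphere_def)
  note zinf_le = lp_optimal_value_ge_inradius[OF unit ins opt]
  obtain L where "zs \<longlonglongrightarrow> L"
    using decseq_convergent[OF lp_optimal_value_decseq[OF opt], of zinf] zinf_le by blast
  with zinf_le have "zinf \<le> L"
    by (intro LIMSEQ_le_const) auto
  have "xs \<longlonglongrightarrow> xinf"
  proof (rule LIMSEQ_if_unique_limit_point[OF compact_cbox])
    show "xs l \<in> cbox (-1) 1" for l
      using opt[of l] by (simp add: lp_optimal_def lp_feasible_def mem_box_cart)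
    show "y = xinf" if "strict_mono r" and "(xs \<circ> r) \<longlonglongrightarrow> y" for r y
    proof (rule insphere_center_unique[OF unit ins \<open>0 < zinf\<close>])
      show "norm y \<le> 1"
        using limit_point_norm_le_1[OF lp_optimal_inner_le_norm[OF opt] that] .
      show "\<forall>i<p. zinf \<le> k i \<bullet> y"
        using lp_optimal_limit_margin[OF opt that \<open>zs \<longlonglongrightarrow> L\<close>] \<open>zinf \<le> L\<close> by (meson order_trans)
    qed
  qed
  then have "\<forall>i<p. L \<le> k i \<bullet> xinf"
    using lp_optimal_limit_margin[OF opt strict_mono_id _ \<open>zs \<longlonglongrightarrow> L\<close>] by simp
  then have "L \<le> zinf"
    using insphere_radius_ge[OF unit ins, of 1 xinf L] \<open>norm xinf \<le> 1\<close> \<open>0 < zinf\<close> \<open>zinf \<le> L\<close>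
    by simp
  with \<open>xs \<longlonglongrightarrow> xinf\<close> \<open>zs \<longlonglongrightarrow> L\<close> \<open>zinf \<le> L\<close> show ?thesis
    by simp
qed

end
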